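(* Let $f$ be a smooth function on $S^n$ and let $u$ be a smooth positive solution of the conformal mean curvature flow on $[0,T)$ for some $T>0$, with initial data $u_0$ satisfying $\int_{S^n} f u_0^{2^\#}\,d\mu_{S^n}>0$. Then $\int_{S^n} f u(t)^{2^\#}\,d\mu_{S^n}>0$ for all $t\in[0,T)$.
   Context: Setting: $n\ge2$, $B^{n+1}$ the unit ball with Euclidean metric $g_e$, $S^n=\partial B^{n+1}$ with round volume form $d\mu_{S^n}$ and volume $\omega_n$; $2^\#=\frac{2n}{n-1}$, $a_n=\frac{2}{n-1}$, $\partial/\partial\eta_e$ the outward normal derivative. For positive smooth $u$ on $\overline{B^{n+1}}$ with $\Delta_{g_e}u=0$, the metric $g=u^{4/(n-1)}g_e$ is scalar-flat, has boundary mean curvature $H=u^{-\frac{n+1}{n-1}}\big(a_n\frac{\partial u}{\partial\eta_e}+u\big)$ and boundary volume form $d\mu_g=u^{2^\#}d\mu_{S^n}$. Define $E[u]=\frac{1}{\omega_n}\int_{B^{n+1}}a_n|\nabla u|^2\,dV_{g_e}+\frac{1}{\omega_n}\int_{S^n}u^2\,d\mu_{S^n}$ and $E_f[u]=E[u]\big/\big(\frac{1}{\omega_n}\int_{S^n}fu^{2^\#}d\mu_{S^n}\big)^{(n-1)/n}$. The conformal mean curvature flow is a family $u(t)>0$ of smooth functions on $\overline{B^{n+1}}$ with $\Delta_{g_e}u(t)=0$ in $B^{n+1}$, $\partial_t u=-\frac{n-1}{4}(H-\lambda(t)f)u$ on $S^n$, $u(0)=u_0$, where $\lambda(t)=E[u(t)]\big/\big(\frac{1}{\omega_n}\int_{S^n}fu(t)^{2^\#}d\mu_{S^n}\big)$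 and $H=H(t)$ is the mean curvature of $g(t)=u(t)^{4/(n-1)}g_e$. *)

theory Defs
  imports "HOL-Analysis.Analysis"
begin

fun dirderiv :: "'a::real_normed_vector list \<Rightarrow> ('a \<Rightarrow> real) \<Rightarrow> 'a \<Rightarrow> real" where
  "dirderiv [] g = g"
| "dirderiv (v # vs) g = (\<lambda>x. frechet_derivative (dirderiv vs g) (at x) v)"

definition smooth_on :: "'a::real_normed_vector set \<Rightarrow> ('a \<Rightarrow> real) \<Rightarrow> bool" where
  "smooth_on U g \<longleftrightarrow> open U \<and> (\<forall>vs. \<forall>x\<in>U. dirderiv vs g differentiable (at x))"

definition grad_sq :: "('a::euclidean_space \<Rightarrow> real) \<Rightarrow> 'a \<Rightarrow> real" where
  "grad_sq g x = (\<Sum>b\<in>Basis. (frechet_derivative g (at x) b)^2)"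

definition laplacian :: "('a::euclidean_space \<Rightarrow> real) \<Rightarrow> 'a \<Rightarrow> real" where
  "laplacian g x = (\<Sum>b\<in>Basis. frechet_derivative (\<lambda>y. frechet_derivative g (at y) b) (at x) b)"

text \<open>Outward normal derivative on the unit sphere: the normal at x is x itself.\<close>
definition normal_deriv :: "('a::euclidean_space \<Rightarrow> real) \<Rightarrow> 'a \<Rightarrow> real" where
  "normal_deriv g x = frechet_derivative g (at x) x"

text \<open>Integral against the round (surface) measure of the unit sphere of 'a, given via the
  cone construction: int_S g d mu = DIM('a) * int_B g(x/|x|) dx.\<close>
definition sphere_int :: "('a::euclidean_space \<Rightarrow> real) \<Rightarrow> real" where
  "sphere_int g = real DIM('a) * (LINT x:ball 0 1|lborel. g (x /\<^sub>R norm x))"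

definition omega :: "'a::euclidean_space itself \<Rightarrow> real" where
  "omega _ = sphere_int (\<lambda>_::'a. 1)"

definition ball_int :: "('a::euclidean_space \<Rightarrow> real) \<Rightarrow> real" where
  "ball_int g = (LINT x:ball 0 1|lborel. g x)"

definition crit_exp :: "nat \<Rightarrow> real" where
  "crit_exp n = 2 * real n / (real n - 1)"

definition a_const :: "nat \<Rightarrow> real" where
  "a_const n = 2 / (real n - 1)"

definition energy :: "nat \<Rightarrow> ('a::euclidean_space \<Rightarrow> real) \<Rightarrow> real" where
  "energy n u = (1 / omega TYPE('a)) * ball_int (\<lambda>x. a_const n * grad_sq u x)
              + (1 / omega TYPE('a)) * sphere_int (\<lambda>x. (u x)^2)"

definition f_integral :: "nat \<Rightarrow> ('a::euclidean_space \<Rightarrow> real) \<Rightarrow> ('a \<Rightarrow> real) \<Rightarrow> real" where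
  "f_integral n f u = sphere_int (\<lambda>x. f x * u x powr crit_exp n)"

definition mean_curv :: "nat \<Rightarrow> ('a::euclidean_space \<Rightarrow> real) \<Rightarrow> 'a \<Rightarrow> real" where
  "mean_curv n u x = u x powr (- (real n + 1) / (real n - 1)) * (a_const n * normal_deriv u x + u x)"

definition lambda_coef :: "nat \<Rightarrow> ('a::euclidean_space \<Rightarrow> real) \<Rightarrow> ('a \<Rightarrow> real) \<Rightarrow> real" where
  "lambda_coef n f u = energy n u / ((1 / omega TYPE('a)) * f_integral n f u)"

text \<open>u is a smooth positive solution of the conformal mean curvature flow on [0,T) with
  initial datum u 0.  Smoothness is joint in (t,x) up to the boundary of the ball and up to t = 0
  (expressed as smoothness on an open neighbourhood of [0,T) x closed ball).\<close>
definition cmcf_solution :: "nat \<Rightarrow> ('a::euclidean_space \<Rightarrow> real) \<Rightarrow> real \<Rightarrow> (real \<Rightarrow> 'a \<Rightarrow> real) \<Rightarrow> bool" where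
  "cmcf_solution n f T u \<longleftrightarrow>
     (\<exists>U. {0..<T} \<times> cball 0 1 \<subseteq> U \<and> smooth_on U (\<lambda>(t, x). u t x))
   \<and> (\<forall>t\<in>{0..<T}. \<forall>x\<in>cball 0 1. u t x > 0)
   \<and> (\<forall>t\<in>{0..<T}. \<forall>x\<in>ball 0 1. laplacian (u t) x = 0)
   \<and> (\<forall>t\<in>{0..<T}. \<forall>x\<in>sphere 0 1.
        ((\<lambda>s. u s x) has_real_derivative
           (- (real n - 1) / 4 * (mean_curv n (u t) x - lambda_coef n f (u t) * f x) * u t x))
        (at t within {0..<T}))"

end

theory Submission
  imports Defs
begin

text \<open>Write \<open>F(t) = \<integral>\<^sub>S f u(t)\<^sup>2\<^sup>#\<close>. Differentiating under the integral and inserting the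
  flow equation gives \<open>F' = (n/2) \<integral>\<^sub>S u\<^sup>2\<^sup># (\<lambda> f\<^sup>2 - f H)\<close>. On a compact time interval
  \<open>u\<close> is bounded above and below by positive constants and \<open>f\<close>, \<open>H\<close> are bounded, so
  \<open>F' \<ge> (n/2)(\<lambda> m\<^sup>2\<^sup># \<integral>\<^sub>S f\<^sup>2 - K)\<close>, where \<open>\<integral>\<^sub>S f\<^sup>2 > 0\<close> because \<open>F(0) > 0\<close>. Since the energy
  is at least \<open>m\<^sup>2\<close>, \<open>\<lambda> = \<omega> E / F \<ge> \<omega> m\<^sup>2 / F\<close> blows up as \<open>F \<down> 0\<close>: thus \<open>F\<close> is
  increasing whenever it is positive and small, and it can never reach \<open>0\<close>.\<close>

section \<open>Integration over the round sphere\<close>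

lemma compact_continuous_abs_bound:
  fixes g :: "'a::topological_space \<Rightarrow> real"
  assumes "compact K" "continuous_on K g"
  obtains B where "\<And>z. z \<in> K \<Longrightarrow> \<bar>g z\<bar> \<le> B"
  using compact_imp_bounded[OF compact_continuous_image[OF assms(2,1)]]
  unfolding bounded_iff by auto

lemma compact_continuous_pos_lower_bound:
  fixes g :: "'a::topological_space \<Rightarrow> real"
  assumes "compact K" "continuous_on K g" "\<And>z. z \<in> K \<Longrightarrow> 0 < g z"
  obtains m where "0 < m" "\<And>z. z \<in> K \<Longrightarrow> m \<le> g z"
proof (cases "K = {}")
  case False
  then obtain z0 where "z0 \<in> K" "\<And>z. z \<in> K \<Longrightarrow> g z0 \<le> g z"
    using continuous_attains_inf[OF assms(1) _ assms(2)] by blast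
  then show ?thesis using that assms(3) by blast
qed (use that[of 1] in auto)

lemma sphere_cone_measurable:
  fixes h :: "'a::euclidean_space \<Rightarrow> real"
  assumes "continuous_on (sphere 0 1) h"
  shows "(\<lambda>x. indicator (ball 0 1) x *\<^sub>R h (x /\<^sub>R norm x)) \<in> borel_measurable lborel"
proof -
  have "continuous_on (ball 0 1 - {0}) (\<lambda>x. h (x /\<^sub>R norm x))"
    by (rule continuous_on_compose2[OF assms])
      (auto intro!: continuous_intros simp: field_simps split: if_splits)
  then have "(\<lambda>x. indicator (ball 0 1 - {0}) x *\<^sub>R h (x /\<^sub>R norm x)) \<in> borel_measurable borel"
    by (rule borel_measurable_continuous_on_indicator[rotated]) auto
  moreover have "(\<lambda>x::'a. indicator {0} x *\<^sub>R h 0) \<in> borel_measurable borel"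
    by measurable
  moreover have "(\<lambda>x. indicator (ball 0 1) x *\<^sub>R h (x /\<^sub>R norm x)) =
      (\<lambda>x. indicator (ball 0 1 - {0}) x *\<^sub>R h (x /\<^sub>R norm x) + indicator {0} x *\<^sub>R h 0)"
    by (auto simp: indicator_def)
  ultimately show ?thesis by simp
qed

lemma integrable_ball_indicator_const:
  fixes B :: real
  shows "integrable lborel (\<lambda>x::'a::euclidean_space. indicator (ball 0 1) x * B)"
  using emeasure_bounded_finite[OF bounded_ball, of "0::'a" 1]
  by (intro integrable_mult_left integrable_real_indicator) auto

lemma sphere_cone_integrable:
  fixes h :: "'a::euclidean_space \<Rightarrow> real"
  assumes "continuous_on (sphere 0 1) h"
  shows "integrable lborel (\<lambda>x. indicator (ball 0 1) x *\<^sub>R h (x /\<^sub>R norm x))"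
proof -
  obtain B where B: "\<And>y. y \<in> sphere (0::'a) 1 \<Longrightarrow> \<bar>h y\<bar> \<le> B"
    using compact_continuous_abs_bound[OF compact_sphere assms] by blast
  show ?thesis
  proof (rule Bochner_Integration.integrable_bound[OF integrable_ball_indicator_const
        sphere_cone_measurable[OF assms]])
    show "AE x in lborel. norm (indicator (ball 0 1) x *\<^sub>R h (x /\<^sub>R norm x))
        \<le> norm (indicator (ball 0 1) x * B)"
      using AE_lborel_singleton[of 0]
    proof eventually_elim
      fix x :: 'a assume "x \<noteq> 0"
      then have "norm (h (x /\<^sub>R norm x)) \<le> B" using B by auto
      then show "norm (indicator (ball 0 1) x *\<^sub>R h (x /\<^sub>R norm x))
          \<le> norm (indicator (ball 0 1) x * B)"
        by (auto simp: indicator_def)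
    qed
  qed
qed

lemma sphere_int_lborel:
  "sphere_int h = real DIM('a) * integral\<^sup>L lborel (\<lambda>x. indicator (ball 0 1) x *\<^sub>R h (x /\<^sub>R norm x))"
  for h :: "'a::euclidean_space \<Rightarrow> real"
  unfolding sphere_int_def set_lebesgue_integral_def by simp

lemma sphere_int_mono:
  fixes h k :: "'a::euclidean_space \<Rightarrow> real"
  assumes "\<And>x. x \<in> sphere 0 1 \<Longrightarrow> h x \<le> k x"
    and "continuous_on (sphere 0 1) h" "continuous_on (sphere 0 1) k"
  shows "sphere_int h \<le> sphere_int k"
proof -
  have "integral\<^sup>L lborel (\<lambda>x. indicator (ball 0 1) x *\<^sub>R h (x /\<^sub>R norm x)) \<le>
        integral\<^sup>L lborel (\<lambda>x. indicator (ball 0 1) x *\<^sub>R k (x /\<^sub>R norm x))"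
  proof (rule integral_mono_AE[OF sphere_cone_integrable[OF assms(2)]
        sphere_cone_integrable[OF assms(3)]])
    show "AE x in lborel. indicator (ball 0 1) x *\<^sub>R h (x /\<^sub>R norm x)
        \<le> indicator (ball 0 1) x *\<^sub>R k (x /\<^sub>R norm x)"
      using AE_lborel_singleton[of 0]
      by eventually_elim (auto simp: indicator_def assms(1))
  qed
  then show ?thesis by (simp add: sphere_int_lborel)
qed

lemma sphere_int_diff:
  fixes h k :: "'a::euclidean_space \<Rightarrow> real"
  assumes "continuous_on (sphere 0 1) h" "continuous_on (sphere 0 1) k"
  shows "sphere_int (\<lambda>x. h x - k x) = sphere_int h - sphere_int k"
proof -
  have "(\<lambda>x. indicator (ball 0 1) x *\<^sub>R (h (x /\<^sub>R norm x) - k (x /\<^sub>R norm x))) =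
      (\<lambda>x. indicator (ball 0 1) x *\<^sub>R h (x /\<^sub>R norm x) - indicator (ball 0 1) x *\<^sub>R k (x /\<^sub>R norm x))"
    by (simp add: algebra_simps)
  then show ?thesis
    using Bochner_Integration.integral_diff[OF sphere_cone_integrable[OF assms(1)]
        sphere_cone_integrable[OF assms(2)]]
    by (simp add: sphere_int_lborel right_diff_distrib)
qed

lemma sphere_int_add:
  fixes h k :: "'a::euclidean_space \<Rightarrow> real"
  assumes "continuous_on (sphere 0 1) h" "continuous_on (sphere 0 1) k"
  shows "sphere_int (\<lambda>x. h x + k x) = sphere_int h + sphere_int k"
  using sphere_int_diff[of "\<lambda>x. h x + k x" k] assms by (simp add: continuous_intros)

lemma sphere_int_cmult: "sphere_int (\<lambda>x. c * h x) = c * sphere_int h"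
  for h :: "'a::euclidean_space \<Rightarrow> real"
  by (simp add: sphere_int_lborel algebra_simps)

lemma sphere_int_divide: "sphere_int (\<lambda>x. h x / c) = sphere_int h / c"
  for h :: "'a::euclidean_space \<Rightarrow> real"
  using sphere_int_cmult[of "1 / c" h] by simp

lemma sphere_int_const: "sphere_int (\<lambda>_::'a::euclidean_space. c) = c * omega TYPE('a)"
  unfolding omega_def using sphere_int_cmult[of c "\<lambda>_::'a. 1"] by simp

lemma omega_pos: "0 < omega TYPE('a::euclidean_space)"
proof -
  have "omega TYPE('a) = real DIM('a) * measure lborel (ball (0::'a) 1)"
    unfolding omega_def sphere_int_def
    using emeasure_bounded_finite[OF bounded_ball, of "0::'a" 1]
    by (subst set_integral_const) auto
  then show ?thesis by simp
qed

lemma sphere_int_ge_const: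
  fixes h :: "'a::euclidean_space \<Rightarrow> real"
  assumes "\<And>x. x \<in> sphere 0 1 \<Longrightarrow> b \<le> h x" "continuous_on (sphere 0 1) h"
  shows "b * omega TYPE('a) \<le> sphere_int h"
  using sphere_int_mono[of "\<lambda>_. b" h] assms by (simp add: sphere_int_const)

lemma sphere_int_le_const:
  fixes h :: "'a::euclidean_space \<Rightarrow> real"
  assumes "\<And>x. x \<in> sphere 0 1 \<Longrightarrow> h x \<le> b" "continuous_on (sphere 0 1) h"
  shows "sphere_int h \<le> b * omega TYPE('a)"
  using sphere_int_mono[of h "\<lambda>_. b"] assms by (simp add: sphere_int_const)

lemma sphere_int_LIMSEQ:
  fixes h :: "nat \<Rightarrow> 'a::euclidean_space \<Rightarrow> real"
  assumes "\<And>i. continuous_on (sphere 0 1) (h i)" "continuous_on (sphere 0 1) h0"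
    and "\<And>i x. x \<in> sphere 0 1 \<Longrightarrow> \<bar>h i x\<bar> \<le> B"
    and "\<And>x. x \<in> sphere 0 1 \<Longrightarrow> (\<lambda>i. h i x) \<longlonglongrightarrow> h0 x"
  shows "(\<lambda>i. sphere_int (h i)) \<longlonglongrightarrow> sphere_int h0"
proof -
  have "(\<lambda>i. integral\<^sup>L lborel (\<lambda>x. indicator (ball 0 1) x *\<^sub>R h i (x /\<^sub>R norm x))) \<longlonglongrightarrow>
        integral\<^sup>L lborel (\<lambda>x. indicator (ball 0 1) x *\<^sub>R h0 (x /\<^sub>R norm x))"
  proof (rule integral_dominated_convergence[OF sphere_cone_measurable[OF assms(2)]
        sphere_cone_measurable[OF assms(1)] integrable_ball_indicator_const])
    show "AE x in lborel. (\<lambda>i. indicator (ball 0 1) x *\<^sub>R h i (x /\<^sub>R norm x))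
        \<longlonglongrightarrow> indicator (ball 0 1) x *\<^sub>R h0 (x /\<^sub>R norm x)"
      using AE_lborel_singleton[of 0]
      by eventually_elim (intro tendsto_intros assms(4), simp)
    show "AE x in lborel. norm (indicator (ball 0 1) x *\<^sub>R h i (x /\<^sub>R norm x))
        \<le> indicator (ball 0 1) x * B" for i
      using AE_lborel_singleton[of 0]
      by eventually_elim (use assms(3) in \<open>auto simp: indicator_def\<close>)
  qed
  then show ?thesis unfolding sphere_int_lborel by (intro tendsto_intros)
qed

lemma sphere_int_tendsto:
  fixes h :: "real \<Rightarrow> 'a::euclidean_space \<Rightarrow> real"
  assumes ev: "eventually (\<lambda>y. continuous_on (sphere 0 1) (h y) \<and>
      (\<forall>x\<in>sphere 0 1. \<bar>h y x\<bar> \<le> B)) (at s within I)"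
    and cont: "continuous_on (sphere 0 1) h0"
    and lim: "\<And>x. x \<in> sphere 0 1 \<Longrightarrow> ((\<lambda>y. h y x) \<longlongrightarrow> h0 x) (at s within I)"
  shows "((\<lambda>y. sphere_int (h y)) \<longlongrightarrow> sphere_int h0) (at s within I)"
  unfolding tendsto_at_iff_sequentially
proof (intro allI impI)
  fix X :: "nat \<Rightarrow> real"
  assume "\<forall>i. X i \<in> I - {s}" "X \<longlonglongrightarrow> s"
  then have X: "filterlim X (at s within I) sequentially"
    by (auto simp: filterlim_at)
  from filterlim_iff[THEN iffD1, OF X, rule_format, OF ev]
  obtain N where N: "\<And>i. N \<le> i \<Longrightarrow>
      continuous_on (sphere 0 1) (h (X i)) \<and> (\<forall>x\<in>sphere 0 1. \<bar>h (X i) x\<bar> \<le> B)"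
    by (auto simp: eventually_sequentially)
  have "(\<lambda>i. sphere_int (h (X (i + N)))) \<longlonglongrightarrow> sphere_int h0"
  proof (rule sphere_int_LIMSEQ[OF _ cont, where B=B])
    fix x :: 'a assume "x \<in> sphere 0 1"
    from filterlim_compose[OF lim[OF this] X]
    show "(\<lambda>i. h (X (i + N)) x) \<longlonglongrightarrow> h0 x"
      by (rule LIMSEQ_ignore_initial_segment)
  qed (use N in auto)
  then show "((\<lambda>y. sphere_int (h y)) \<circ> X) \<longlonglongrightarrow> sphere_int h0"
    unfolding comp_def by (rule LIMSEQ_offset)
qed

lemma continuous_on_slice:
  assumes "continuous_on (A \<times> B) (\<lambda>(t, x). h t x)" "t \<in> A" "C \<subseteq> B"
  shows "continuous_on C (h t)"
proof -
  have "continuous_on C (\<lambda>x. (\<lambda>(t, x). h t x) (t, x))"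
    by (rule continuous_on_compose2[OF assms(1)]) (use assms(2,3) in \<open>auto intro!: continuous_intros\<close>)
  then show ?thesis by simp
qed

lemma continuous_on_sphere_int:
  fixes h :: "real \<Rightarrow> 'a::euclidean_space \<Rightarrow> real"
  assumes cont: "continuous_on ({a..b} \<times> sphere 0 1) (\<lambda>(t, x). h t x)"
  shows "continuous_on {a..b} (\<lambda>t. sphere_int (h t))"
  unfolding continuous_on_def
proof
  fix s assume s: "s \<in> {a..b}"
  obtain B where B: "\<And>z. z \<in> {a..b} \<times> sphere 0 1 \<Longrightarrow> \<bar>(\<lambda>(t, x). h t x) z\<bar> \<le> B"
    using compact_continuous_abs_bound[OF compact_Times[OF compact_Icc compact_sphere] cont]
    by blast
  have slice: "continuous_on (sphere 0 1) (h t)" if "t \<in> {a..b}" for t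
    using continuous_on_slice[OF cont that] by simp
  show "((\<lambda>t. sphere_int (h t)) \<longlongrightarrow> sphere_int (h s)) (at s within {a..b})"
  proof (rule sphere_int_tendsto[OF _ slice[OF s]])
    show "eventually (\<lambda>y. continuous_on (sphere 0 1) (h y) \<and> (\<forall>x\<in>sphere 0 1. \<bar>h y x\<bar> \<le> B))
        (at s within {a..b})"
      using B slice by (auto simp: eventually_at_filter)
    fix x :: 'a assume "x \<in> sphere 0 1"
    then have "continuous_on {a..b} (\<lambda>t. (\<lambda>(t, x). h t x) (t, x))"
      by (intro continuous_on_compose2[OF cont]) (auto intro!: continuous_intros)
    then show "((\<lambda>y. h y x) \<longlongrightarrow> h s x) (at s within {a..b})"
      using s unfolding continuous_on_def by simp
  qed
qed

lemma has_real_derivative_sphere_int: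
  fixes h h' :: "real \<Rightarrow> 'a::euclidean_space \<Rightarrow> real"
  assumes s: "a < s" "s < b"
    and deriv: "\<And>t x. a < t \<Longrightarrow> t < b \<Longrightarrow> x \<in> sphere 0 1 \<Longrightarrow>
      ((\<lambda>t. h t x) has_real_derivative h' t x) (at t)"
    and bound: "\<And>t x. a < t \<Longrightarrow> t < b \<Longrightarrow> x \<in> sphere 0 1 \<Longrightarrow> \<bar>h' t x\<bar> \<le> B"
    and cont: "\<And>t. a < t \<Longrightarrow> t < b \<Longrightarrow> continuous_on (sphere 0 1) (h t)"
    and cont': "continuous_on (sphere 0 1) (h' s)"
  shows "((\<lambda>t. sphere_int (h t)) has_real_derivative sphere_int (h' s)) (at s)"
proof -
  define dq where "dq y x = (h y x - h s x) / (y - s)" for y x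
  have dq_bound: "\<bar>dq y x\<bar> \<le> B" if y: "a < y" "y < b" "y \<noteq> s" and x: "x \<in> sphere 0 1" for y x
  proof -
    define p q where "p = min y s" and "q = max y s"
    have pq: "p < q" "a < p" "q < b" using y s by (auto simp: p_def q_def)
    obtain z where z: "p < z" "z < q" and mvt: "h q x - h p x = (q - p) * h' z x"
      using MVT2[OF pq(1), of "\<lambda>t. h t x" "\<lambda>t. h' t x"] deriv[OF _ _ x] pq by fastforce
    have "dq y x = h' z x"
      using mvt pq(1) by (cases "y < s") (auto simp: dq_def p_def q_def field_simps)
    then show ?thesis using bound[OF _ _ x, of z] z pq by auto
  qed
  have near: "eventually (\<lambda>y. a < y \<and> y < b \<and> y \<noteq> s) (at s)"
    unfolding eventually_at
    by (rule exI[of _ "min (s - a) (b - s)"]) (use s in \<open>auto simp: dist_real_def\<close>)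
  have "((\<lambda>y. sphere_int (dq y)) \<longlongrightarrow> sphere_int (h' s)) (at s)"
  proof (rule sphere_int_tendsto[OF _ cont'])
    show "eventually (\<lambda>y. continuous_on (sphere 0 1) (dq y) \<and> (\<forall>x\<in>sphere 0 1. \<bar>dq y x\<bar> \<le> B)) (at s)"
      using near
    proof eventually_elim
      case (elim y)
      have "continuous_on (sphere 0 1) (dq y)"
        unfolding dq_def[abs_def] using elim s by (intro continuous_intros cont) auto
      then show ?case using dq_bound elim by blast
    qed
    show "((\<lambda>y. dq y x) \<longlongrightarrow> h' s x) (at s)" if "x \<in> sphere 0 1" for x
      using deriv[OF s that] by (simp add: dq_def has_field_derivative_iff)
  qed
  moreover have "eventually (\<lambda>y. sphere_int (dq y) = (sphere_int (h y) - sphere_int (h s)) / (y - s)) (at s)"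
    using near by eventually_elim
      (use s in \<open>simp add: dq_def[abs_def] sphere_int_divide sphere_int_diff cont\<close>)
  ultimately show ?thesis
    unfolding has_field_derivative_iff by (rule Lim_transform_eventually)
qed

lemma sphere_int_sq_pos:
  fixes f v :: "'a::euclidean_space \<Rightarrow> real"
  assumes "continuous_on (sphere 0 1) f" "continuous_on (sphere 0 1) v"
    and "0 < sphere_int (\<lambda>x. f x * v x)"
  shows "0 < sphere_int (\<lambda>x. (f x)\<^sup>2)"
proof (rule ccontr)
  assume "\<not> 0 < sphere_int (\<lambda>x. (f x)\<^sup>2)"
  moreover have "0 * omega TYPE('a) \<le> sphere_int (\<lambda>x. (f x)\<^sup>2)"
    using assms(1) by (intro sphere_int_ge_const continuous_intros) auto
  ultimately have f0: "sphere_int (\<lambda>x. (f x)\<^sup>2) = 0" by simp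
  define P where "P = sphere_int (\<lambda>x. f x * v x)"
  define S where "S = sphere_int (\<lambda>x. (v x)\<^sup>2)"
  have "0 * omega TYPE('a) \<le> S"
    unfolding S_def using assms(2) by (intro sphere_int_ge_const continuous_intros) auto
  then have S: "0 \<le> S" by simp
  define \<epsilon> where "\<epsilon> = P / (S + 1)"
  have P: "0 < P" using assms(3) by (simp add: P_def)
  have \<epsilon>: "0 < \<epsilon>" using P S by (simp add: \<epsilon>_def)
  have young: "f x * v x \<le> (f x)\<^sup>2 / (2 * \<epsilon>) + \<epsilon> / 2 * (v x)\<^sup>2" for x
  proof -
    have "0 \<le> (f x - \<epsilon> * v x)\<^sup>2" by simp
    then show ?thesis using \<epsilon> by (simp add: field_simps power2_eq_square)
  qed
  have "P \<le> sphere_int (\<lambda>x. (f x)\<^sup>2 / (2 * \<epsilon>) + \<epsilon> / 2 * (v x)\<^sup>2)"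
    unfolding P_def using young assms(1,2) \<epsilon> by (intro sphere_int_mono continuous_intros) auto
  also have "\<dots> = sphere_int (\<lambda>x. (f x)\<^sup>2) / (2 * \<epsilon>) + \<epsilon> / 2 * S"
    using assms(1,2) \<epsilon> unfolding S_def
    by (subst sphere_int_add) (auto intro!: continuous_intros simp: sphere_int_divide sphere_int_cmult)
  also have "\<dots> = \<epsilon> / 2 * S"
    by (simp add: f0)
  also have "\<dots> < P"
    using P S by (simp add: \<epsilon>_def field_simps add_nonneg_pos)
  finally show False by simp
qed

section \<open>Smooth slices, energy and the flow velocity\<close>

lemma continuous_on_smooth: "smooth_on U g \<Longrightarrow> continuous_on U g"
  unfolding smooth_on_def
  by (metis continuous_at_imp_continuous_on differentiable_imp_continuous_within dirderiv.simps(1))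

lemma continuous_on_smooth_directional_derivative:
  "smooth_on U g \<Longrightarrow> continuous_on U (\<lambda>z. frechet_derivative g (at z) v)"
proof (intro continuous_at_imp_continuous_on ballI)
  fix x assume "smooth_on U g" "x \<in> U"
  then have "dirderiv [v] g differentiable (at x)" unfolding smooth_on_def by blast
  then show "isCont (\<lambda>z. frechet_derivative g (at z) v) x"
    using differentiable_imp_continuous_within by fastforce
qed

lemma has_derivative_smooth_slice:
  fixes g :: "real \<times> 'a::euclidean_space \<Rightarrow> real"
  assumes "smooth_on U g" "(t, x) \<in> U"
  shows "((\<lambda>y. g (t, y)) has_derivative (\<lambda>w. frechet_derivative g (at (t, x)) (0, w))) (at x)"
proof -
  have "g differentiable (at (t, x))"
    using assms unfolding smooth_on_def by (metis dirderiv.simps(1))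
  then have "(g has_derivative frechet_derivative g (at (t, x))) (at (t, x))"
    using frechet_derivative_works by blast
  moreover have "((\<lambda>y. (t, y)) has_derivative (\<lambda>w. (0, w))) (at x)"
    by (auto intro!: derivative_eq_intros)
  ultimately show ?thesis
    using diff_chain_at by (fastforce simp: o_def)
qed

lemma frechet_derivative_smooth_slice:
  fixes g :: "real \<times> 'a::euclidean_space \<Rightarrow> real"
  assumes "smooth_on U g" "(t, x) \<in> U"
  shows "frechet_derivative (\<lambda>y. g (t, y)) (at x) = (\<lambda>w. frechet_derivative g (at (t, x)) (0, w))"
  using frechet_derivative_at[OF has_derivative_smooth_slice[OF assms]] by simp

lemma normal_deriv_smooth_slice:
  fixes g :: "real \<times> 'a::euclidean_space \<Rightarrow> real"
  assumes "smooth_on U g" "(t, x) \<in> U"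
  shows "normal_deriv (\<lambda>y. g (t, y)) x = (\<Sum>b\<in>Basis. (x \<bullet> b) * frechet_derivative g (at (t, x)) (0, b))"
proof -
  have lin: "linear (\<lambda>w. frechet_derivative g (at (t, x)) (0, w))"
    using has_derivative_linear[OF has_derivative_smooth_slice[OF assms]] .
  have "normal_deriv (\<lambda>y. g (t, y)) x = frechet_derivative g (at (t, x)) (0, \<Sum>b\<in>Basis. (x \<bullet> b) *\<^sub>R b)"
    unfolding normal_deriv_def frechet_derivative_smooth_slice[OF assms] euclidean_representation ..
  also have "\<dots> = (\<Sum>b\<in>Basis. (x \<bullet> b) * frechet_derivative g (at (t, x)) (0, b))"
    using linear_sum[OF lin, of "\<lambda>b. (x \<bullet> b) *\<^sub>R b" Basis] linear_scale[OF lin] by simp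
  finally show ?thesis .
qed

lemma continuous_on_mean_curv_smooth_slice:
  fixes g :: "real \<times> 'a::euclidean_space \<Rightarrow> real"
  assumes "smooth_on U g" "W \<subseteq> U" "\<And>z. z \<in> W \<Longrightarrow> 0 < g z"
  shows "continuous_on W (\<lambda>(t, x). mean_curv n (\<lambda>y. g (t, y)) x)"
proof (rule continuous_on_eq)
  show "continuous_on W (\<lambda>z. g z powr (- (real n + 1) / (real n - 1)) *
      (a_const n * (\<Sum>b\<in>Basis. (snd z \<bullet> b) * frechet_derivative g (at z) (0, b)) + g z))"
    using assms
    by (intro continuous_intros continuous_on_subset[OF continuous_on_smooth[OF assms(1)]]
        continuous_on_subset[OF continuous_on_smooth_directional_derivative[OF assms(1)]])
      (auto simp: less_imp_neq[symmetric])
qed (use assms in \<open>auto simp: mean_curv_def normal_deriv_smooth_slice\<close>)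

lemma continuous_on_grad_sq_smooth_slice:
  fixes g :: "real \<times> 'a::euclidean_space \<Rightarrow> real"
  assumes "smooth_on U g" "W \<subseteq> U"
  shows "continuous_on W (\<lambda>(t, x). grad_sq (\<lambda>y. g (t, y)) x)"
proof (rule continuous_on_eq)
  show "continuous_on W (\<lambda>z. \<Sum>b\<in>Basis. (frechet_derivative g (at z) (0, b))\<^sup>2)"
    by (intro continuous_intros
        continuous_on_subset[OF continuous_on_smooth_directional_derivative[OF assms(1)] assms(2)])
qed (use assms in \<open>auto simp: grad_sq_def frechet_derivative_smooth_slice\<close>)

lemma ball_int_nonneg:
  fixes h :: "'a::euclidean_space \<Rightarrow> real"
  assumes "\<And>x. x \<in> ball 0 1 \<Longrightarrow> 0 \<le> h x"
  shows "0 \<le> ball_int h"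
  unfolding ball_int_def set_lebesgue_integral_def
  by (rule integral_nonneg_AE) (auto simp: indicator_def assms)

lemma ball_int_le_const:
  fixes h :: "'a::euclidean_space \<Rightarrow> real"
  assumes "\<And>x. x \<in> ball 0 1 \<Longrightarrow> h x \<le> B" "0 \<le> B"
  shows "ball_int h \<le> B * measure lborel (ball (0::'a) 1)"
proof (cases "set_integrable lborel (ball 0 1) h")
  case True
  have "set_integrable lborel (ball (0::'a) 1) (\<lambda>_. B)"
    using integrable_ball_indicator_const unfolding set_integrable_def by simp
  then have "ball_int h \<le> (LINT x:ball (0::'a) 1|lborel. B)"
    unfolding ball_int_def using True assms(1) by (intro set_integral_mono) auto
  also have "\<dots> = B * measure lborel (ball (0::'a) 1)"
    using emeasure_bounded_finite[OF bounded_ball, of "0::'a" 1]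
    by (subst set_integral_const) auto
  finally show ?thesis .
next
  case False
  then have "ball_int h = 0"
    unfolding ball_int_def set_lebesgue_integral_def set_integrable_def
    by (simp add: not_integrable_integral_eq)
  then show ?thesis using assms(2) by simp
qed

lemma energy_ge_sq:
  fixes v :: "'a::euclidean_space \<Rightarrow> real"
  assumes "1 \<le> n" "continuous_on (sphere 0 1) v" "0 \<le> m" "\<And>x. x \<in> sphere 0 1 \<Longrightarrow> m \<le> v x"
  shows "m\<^sup>2 \<le> energy n v"
proof -
  have "0 \<le> ball_int (\<lambda>x. a_const n * grad_sq v x)"
    using assms(1) by (intro ball_int_nonneg mult_nonneg_nonneg)
      (auto simp: a_const_def grad_sq_def intro!: sum_nonneg)
  moreover have "m\<^sup>2 * omega TYPE('a) \<le> sphere_int (\<lambda>x. (v x)\<^sup>2)"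
    using assms(2-4) by (intro sphere_int_ge_const power_mono continuous_intros) auto
  ultimately show ?thesis
    using omega_pos[where 'a='a] by (simp add: energy_def field_simps)
qed

lemma energy_le:
  fixes v :: "'a::euclidean_space \<Rightarrow> real"
  assumes "1 \<le> n" "continuous_on (sphere 0 1) v" "\<And>x. x \<in> sphere 0 1 \<Longrightarrow> \<bar>v x\<bar> \<le> M"
    and "\<And>x. x \<in> ball 0 1 \<Longrightarrow> grad_sq v x \<le> G" "0 \<le> G"
  shows "energy n v \<le> a_const n * G * measure lborel (ball (0::'a) 1) / omega TYPE('a) + M\<^sup>2"
proof -
  have "0 \<le> a_const n" using assms(1) by (simp add: a_const_def)
  then have "ball_int (\<lambda>x. a_const n * grad_sq v x) \<le> a_const n * G * measure lborel (ball (0::'a) 1)"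
    using assms(4,5) by (intro ball_int_le_const mult_left_mono mult_nonneg_nonneg) auto
  moreover have "sphere_int (\<lambda>x. (v x)\<^sup>2) \<le> M\<^sup>2 * omega TYPE('a)"
    using assms(2,3) by (intro sphere_int_le_const continuous_intros)
      (metis abs_le_square_iff abs_of_nonneg abs_ge_zero order.trans mem_sphere_0)
  moreover have "0 < omega TYPE('a)" by (rule omega_pos)
  ultimately have "ball_int (\<lambda>x. a_const n * grad_sq v x) / omega TYPE('a)
      \<le> a_const n * G * measure lborel (ball (0::'a) 1) / omega TYPE('a)"
    "sphere_int (\<lambda>x. (v x)\<^sup>2) / omega TYPE('a) \<le> M\<^sup>2"
    by (simp_all add: divide_right_mono pos_divide_le_eq)
  then show ?thesis by (simp add: energy_def)
qed

lemma lambda_coef_eq: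
  "lambda_coef n f v = energy n v * omega TYPE('a) / f_integral n f v"
  for v :: "'a::euclidean_space \<Rightarrow> real"
  by (simp add: lambda_coef_def)

definition cmcf_velocity :: "nat \<Rightarrow> ('a::euclidean_space \<Rightarrow> real) \<Rightarrow> ('a \<Rightarrow> real) \<Rightarrow> 'a \<Rightarrow> real" where
  "cmcf_velocity n f v x = - (real n - 1) / 4 * (mean_curv n v x - lambda_coef n f v * f x) * v x"

lemma f_times_velocity_eq:
  fixes v f :: "'a::euclidean_space \<Rightarrow> real"
  assumes "2 \<le> n" "0 < v x"
  shows "f x * (crit_exp n * v x powr (crit_exp n - 1) * cmcf_velocity n f v x) =
    real n / 2 * v x powr crit_exp n * (lambda_coef n f v * (f x)\<^sup>2 - f x * mean_curv n v x)"
proof -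
  have ring: "\<And>(a::real) c P k H l w. a * (c * P * (- k / 4 * (H - l * a) * w))
      = c * k / 4 * (P * w) * (l * a\<^sup>2 - a * H)"
    by (simp add: power2_eq_square field_simps)
  have "v x powr (crit_exp n - 1) * v x = v x powr crit_exp n"
    using assms(2) by (simp add: powr_diff)
  moreover have "crit_exp n * (real n - 1) / 4 = real n / 2"
    using assms(1) by (simp add: crit_exp_def)
  ultimately show ?thesis
    unfolding cmcf_velocity_def ring by simp
qed

lemma sphere_int_velocity_lower:
  fixes f v :: "'a::euclidean_space \<Rightarrow> real"
  assumes n: "2 \<le> n"
    and cont: "continuous_on (sphere 0 1) f" "continuous_on (sphere 0 1) v"
      "continuous_on (sphere 0 1) (mean_curv n v)"
    and m: "0 < m" and lam: "0 \<le> lambda_coef n f v"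
    and bnd: "\<And>x. x \<in> sphere 0 1 \<Longrightarrow>
      m \<le> v x \<and> v x \<le> M \<and> \<bar>mean_curv n v x\<bar> \<le> Hb \<and> \<bar>f x\<bar> \<le> fb"
  shows "real n / 2 * (lambda_coef n f v * m powr crit_exp n * sphere_int (\<lambda>x. (f x)\<^sup>2)
      - fb * Hb * M powr crit_exp n * omega TYPE('a))
    \<le> sphere_int (\<lambda>x. f x * (crit_exp n * v x powr (crit_exp n - 1) * cmcf_velocity n f v x))"
proof -
  let ?c = "crit_exp n" and ?lam = "lambda_coef n f v"
  have c: "0 < ?c" using n by (simp add: crit_exp_def)
  have pointwise: "real n / 2 * (?lam * m powr ?c * (f x)\<^sup>2 - fb * Hb * M powr ?c)
      \<le> f x * (?c * v x powr (?c - 1) * cmcf_velocity n f v x)" if x: "x \<in> sphere 0 1" for x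
  proof -
    note b = bnd[OF x]
    have v: "0 < v x" using b m by linarith
    have lower: "?lam * m powr ?c * (f x)\<^sup>2 \<le> ?lam * v x powr ?c * (f x)\<^sup>2"
      using b m c lam by (intro mult_right_mono mult_left_mono powr_mono2) auto
    have "f x * mean_curv n v x * v x powr ?c \<le> \<bar>f x * mean_curv n v x * v x powr ?c\<bar>"
      by (rule abs_ge_self)
    also have "\<dots> = \<bar>f x\<bar> * \<bar>mean_curv n v x\<bar> * v x powr ?c"
      by (simp add: abs_mult)
    also have "\<dots> \<le> fb * Hb * M powr ?c"
      using b v c by (intro mult_mono powr_mono2) auto
    finally have "?lam * m powr ?c * (f x)\<^sup>2 - fb * Hb * M powr ?c
        \<le> v x powr ?c * (?lam * (f x)\<^sup>2 - f x * mean_curv n v x)"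
      using lower by (simp add: algebra_simps)
    from mult_left_mono[OF this, of "real n / 2"] show ?thesis
      unfolding f_times_velocity_eq[of n v x f, OF n v] by (simp add: mult.assoc)
  qed
  have "sphere_int (\<lambda>x. real n / 2 * (?lam * m powr ?c * (f x)\<^sup>2 - fb * Hb * M powr ?c))
      = real n / 2 * (?lam * m powr ?c * sphere_int (\<lambda>x. (f x)\<^sup>2) - fb * Hb * M powr ?c * omega TYPE('a))"
    unfolding sphere_int_cmult[of "real n / 2"]
    using cont(1) by (subst sphere_int_diff) (auto intro!: continuous_intros simp: sphere_int_cmult sphere_int_const)
  moreover have "sphere_int (\<lambda>x. real n / 2 * (?lam * m powr ?c * (f x)\<^sup>2 - fb * Hb * M powr ?c))
      \<le> sphere_int (\<lambda>x. f x * (?c * v x powr (?c - 1) * cmcf_velocity n f v x))"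
  proof (rule sphere_int_mono[OF pointwise])
    have "\<And>x. x \<in> sphere 0 1 \<Longrightarrow> v x \<noteq> 0" using bnd m by force
    then show "continuous_on (sphere 0 1) (\<lambda>x. f x * (?c * v x powr (?c - 1) * cmcf_velocity n f v x))"
      unfolding cmcf_velocity_def using cont by (intro continuous_intros) auto
  qed (use cont(1) in \<open>auto intro!: continuous_intros\<close>)
  ultimately show ?thesis by simp
qed

lemma pos_if_deriv_pos_near_zero:
  fixes F :: "real \<Rightarrow> real" and b \<epsilon> :: real
  assumes "0 \<le> b" "continuous_on {0..b} F" "0 < F 0" "0 < \<epsilon>"
    and deriv: "\<And>s. 0 < s \<Longrightarrow> s < b \<Longrightarrow> 0 < F s \<Longrightarrow> F s < \<epsilon> \<Longrightarrow>
      \<exists>D. (F has_real_derivative D) (at s) \<and> 0 < D"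
  shows "0 < F b"
proof (rule ccontr)
  assume "\<not> 0 < F b"
  define Z where "Z = {t \<in> {0..b}. F t \<le> 0}"
  define t1 where "t1 = Inf Z"
  have "closed Z"
    unfolding Z_def by (intro continuous_on_closed_Collect_le assms(2) continuous_on_const) auto
  moreover have "Z \<noteq> {}" "bdd_below Z"
    using \<open>\<not> 0 < F b\<close> assms(1) by (auto simp: Z_def bdd_below_def)
  ultimately have "t1 \<in> Z" unfolding t1_def by (rule closed_contains_Inf[rotated -1])
  then have t1: "0 \<le> t1" "t1 \<le> b" "F t1 \<le> 0" by (auto simp: Z_def)
  then have "t1 \<noteq> 0" using assms(3) by auto
  have before: "0 < F t" if "0 \<le> t" "t < t1" for t
    using cInf_lower[OF _ \<open>bdd_below Z\<close>, of t] that t1 unfolding t1_def[symmetric]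
    by (force simp: Z_def)
  \<comment> \<open>F is small just before its first zero, so it increases there: impossible\<close>
  have "eventually (\<lambda>y. F y < \<epsilon>) (at t1 within {0..b})"
    using order_tendstoD(2)[of F "F t1" "at t1 within {0..b}" \<epsilon>] assms(2,4) t1
    unfolding continuous_on_def by auto
  then obtain d where d: "0 < d" "\<And>y. y \<in> {0..b} \<Longrightarrow> y \<noteq> t1 \<Longrightarrow> dist y t1 < d \<Longrightarrow> F y < \<epsilon>"
    unfolding eventually_at by blast
  define s0 where "s0 = max (t1 - d / 2) (t1 / 2)"
  have s0: "0 < s0" "s0 < t1" using t1 \<open>t1 \<noteq> 0\<close> d(1) by (auto simp: s0_def)
  have "F s0 < F t1"
  proof (rule DERIV_pos_imp_increasing_open[OF s0(2)])
    show "continuous_on {s0..t1} F"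
      using s0 t1 by (intro continuous_on_subset[OF assms(2)]) auto
    fix \<sigma> assume "s0 < \<sigma>" "\<sigma> < t1"
    moreover have "t1 - d < s0" using d(1) by (simp add: s0_def)
    ultimately show "\<exists>D. (F has_real_derivative D) (at \<sigma>) \<and> 0 < D"
      using deriv before d(2)[of \<sigma>] s0 t1 by (auto simp: dist_real_def)
  qed
  then show False using before[of s0] s0 t1 by linarith
qed

section \<open>Positivity along the flow\<close>

locale cmcf_flow =
  fixes n :: nat and f :: "'a::euclidean_space \<Rightarrow> real"
    and T :: real and u :: "real \<Rightarrow> 'a \<Rightarrow> real"
  assumes n_ge_2: "2 \<le> n"
    and f_smooth: "\<exists>V. sphere 0 1 \<subseteq> V \<and> smooth_on V f"
    and solution: "cmcf_solution n f T u"
begin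

lemma f_continuous: "continuous_on (sphere 0 1) f"
  using f_smooth continuous_on_smooth continuous_on_subset by blast

lemma f_bounded:
  obtains fb where "\<And>x. x \<in> sphere 0 1 \<Longrightarrow> \<bar>f x\<bar> \<le> fb"
  using compact_continuous_abs_bound[OF compact_sphere f_continuous] by blast

lemma u_pos: "t \<in> {0..<T} \<Longrightarrow> x \<in> cball 0 1 \<Longrightarrow> 0 < u t x"
  using solution unfolding cmcf_solution_def by blast

lemma u_has_real_derivative:
  assumes "0 < t" "t < T" "x \<in> sphere 0 1"
  shows "((\<lambda>s. u s x) has_real_derivative cmcf_velocity n f (u t) x) (at t)"
proof -
  have "((\<lambda>s. u s x) has_real_derivative cmcf_velocity n f (u t) x) (at t within {0..<T})"
    using solution assms unfolding cmcf_solution_def cmcf_velocity_def by simp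
  moreover have "at t within {0..<T} = at t"
    using assms by (intro at_within_interior) auto
  ultimately show ?thesis by simp
qed

lemma joint_continuity:
  shows u_continuous: "continuous_on ({0..<T} \<times> cball 0 1) (\<lambda>(t, x). u t x)"
    and mean_curv_continuous: "continuous_on ({0..<T} \<times> cball 0 1) (\<lambda>(t, x). mean_curv n (u t) x)"
    and grad_sq_continuous: "continuous_on ({0..<T} \<times> cball 0 1) (\<lambda>(t, x). grad_sq (u t) x)"
proof -
  obtain U where U: "{0..<T} \<times> cball 0 1 \<subseteq> U" "smooth_on U (\<lambda>(t, x). u t x)"
    using solution unfolding cmcf_solution_def by blast
  show "continuous_on ({0..<T} \<times> cball 0 1) (\<lambda>(t, x). u t x)"
    using continuous_on_subset[OF continuous_on_smooth[OF U(2)] U(1)] .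
  show "continuous_on ({0..<T} \<times> cball 0 1) (\<lambda>(t, x). mean_curv n (u t) x)"
  proof -
    have "\<And>z. z \<in> {0..<T} \<times> cball 0 1 \<Longrightarrow> 0 < (\<lambda>(t, x). u t x) z"
      using u_pos by auto
    from continuous_on_mean_curv_smooth_slice[OF U(2,1) this, of n] show ?thesis by simp
  qed
  show "continuous_on ({0..<T} \<times> cball 0 1) (\<lambda>(t, x). grad_sq (u t) x)"
    using continuous_on_grad_sq_smooth_slice[OF U(2,1)] by simp
qed

lemma integrand_continuous:
  "continuous_on ({0..<T} \<times> sphere 0 1) (\<lambda>(t, x). f x * u t x powr crit_exp n)"
proof -
  have "{0..<T} \<times> sphere 0 1 \<subseteq> {0..<T} \<times> cball (0::'a) 1"
    using sphere_cball by blast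
  from continuous_on_subset[OF u_continuous this]
  have "continuous_on ({0..<T} \<times> sphere 0 1) (\<lambda>z. u (fst z) (snd z))"
    by (simp add: case_prod_beta')
  moreover have "continuous_on ({0..<T} \<times> sphere 0 1) (\<lambda>z. f (snd z))"
    by (rule continuous_on_compose2[OF f_continuous]) (auto intro!: continuous_intros)
  moreover have "\<And>z. z \<in> {0..<T} \<times> sphere 0 1 \<Longrightarrow> u (fst z) (snd z) \<noteq> 0"
    using u_pos by (fastforce simp: less_imp_neq[symmetric])
  ultimately have "continuous_on ({0..<T} \<times> sphere 0 1) (\<lambda>z. f (snd z) * u (fst z) (snd z) powr crit_exp n)"
    by (intro continuous_intros) auto
  then show ?thesis by (simp add: case_prod_beta')
qed

lemma u_bounds:
  assumes "t' < T"
  obtains m M Hb where "0 < m" "\<And>t x. t \<in> {0..t'} \<Longrightarrow> x \<in> sphere 0 1 \<Longrightarrow>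
    m \<le> u t x \<and> u t x \<le> M \<and> \<bar>mean_curv n (u t) x\<bar> \<le> Hb"
proof -
  let ?K = "{0..t'} \<times> sphere (0::'a) 1"
  have K: "compact ?K" "?K \<subseteq> {0..<T} \<times> cball 0 1"
    using assms by (auto intro!: compact_Times)
  have pos: "\<And>z. z \<in> ?K \<Longrightarrow> 0 < (\<lambda>(t, x). u t x) z"
    using u_pos assms by auto
  obtain m where m: "0 < m" "\<And>z. z \<in> ?K \<Longrightarrow> m \<le> (\<lambda>(t, x). u t x) z"
    using compact_continuous_pos_lower_bound[OF K(1) continuous_on_subset[OF u_continuous K(2)] pos]
    by blast
  obtain M where M: "\<And>z. z \<in> ?K \<Longrightarrow> \<bar>(\<lambda>(t, x). u t x) z\<bar> \<le> M"
    using compact_continuous_abs_bound[OF K(1) continuous_on_subset[OF u_continuous K(2)]] by blast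
  obtain Hb where Hb: "\<And>z. z \<in> ?K \<Longrightarrow> \<bar>(\<lambda>(t, x). mean_curv n (u t) x) z\<bar> \<le> Hb"
    using compact_continuous_abs_bound[OF K(1) continuous_on_subset[OF mean_curv_continuous K(2)]]
    by blast
  show thesis
  proof (rule that[OF m(1)])
    fix t and x :: 'a assume "t \<in> {0..t'}" "x \<in> sphere 0 1"
    then have "(t, x) \<in> ?K" by simp
    from m(2)[OF this] M[OF this] Hb[OF this]
    show "m \<le> u t x \<and> u t x \<le> M \<and> \<bar>mean_curv n (u t) x\<bar> \<le> Hb" by auto
  qed
qed

lemma slice_continuous:
  assumes "t \<in> {0..<T}"
  shows u_slice_continuous: "continuous_on (sphere 0 1) (u t)"
    and mean_curv_slice_continuous: "continuous_on (sphere 0 1) (mean_curv n (u t))"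
  using continuous_on_slice[OF u_continuous assms sphere_cball]
    continuous_on_slice[OF mean_curv_continuous assms sphere_cball] by simp_all

lemma energy_nonneg:
  assumes "t \<in> {0..<T}"
  shows "0 \<le> energy n (u t)"
  using energy_ge_sq[OF _ u_slice_continuous[OF assms], of n 0] n_ge_2 u_pos[OF assms]
  by (force simp: less_imp_le)

lemma energy_bounded:
  assumes "t' < T"
  obtains E where "\<And>t. t \<in> {0..t'} \<Longrightarrow> energy n (u t) \<le> E"
proof -
  let ?K = "{0..t'} \<times> cball (0::'a) 1"
  have K: "compact ?K" "?K \<subseteq> {0..<T} \<times> cball 0 1"
    using assms by (auto intro!: compact_Times)
  obtain G where G: "\<And>z. z \<in> ?K \<Longrightarrow> \<bar>(\<lambda>(t, x). grad_sq (u t) x) z\<bar> \<le> G"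
    using compact_continuous_abs_bound[OF K(1) continuous_on_subset[OF grad_sq_continuous K(2)]]
    by blast
  obtain m M Hb where "0 < m"
    and M: "\<And>t x. t \<in> {0..t'} \<Longrightarrow> x \<in> sphere 0 1 \<Longrightarrow>
      m \<le> u t x \<and> u t x \<le> M \<and> \<bar>mean_curv n (u t) x\<bar> \<le> Hb"
    using u_bounds[OF assms] by blast
  show thesis
  proof (rule that)
    fix t assume t: "t \<in> {0..t'}"
    have "\<bar>u t x\<bar> \<le> M" if "x \<in> sphere 0 1" for x
      using M[OF t that] \<open>0 < m\<close> by auto
    moreover have "grad_sq (u t) x \<le> max G 0" if "x \<in> ball 0 1" for x
      using G[of "(t, x)"] t that by force
    moreover have "t \<in> {0..<T}" using t assms by auto
    ultimately show "energy n (u t) \<le>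
        a_const n * max G 0 * measure lborel (ball (0::'a) 1) / omega TYPE('a) + M\<^sup>2"
      using n_ge_2 by (intro energy_le u_slice_continuous) auto
  qed
qed

lemma f_integral_continuous:
  assumes "t' < T"
  shows "continuous_on {0..t'} (\<lambda>t. f_integral n f (u t))"
  unfolding f_integral_def
  by (rule continuous_on_sphere_int, rule continuous_on_subset[OF integrand_continuous])
    (use assms in auto)


lemma lambda_bounded_near:
  assumes "0 < s" "s < T" "f_integral n f (u s) \<noteq> 0"
  obtains \<rho> L where "0 < \<rho>" "0 < s - \<rho>" "s + \<rho> < T"
    "\<And>t. \<bar>t - s\<bar> < \<rho> \<Longrightarrow> \<bar>lambda_coef n f (u t)\<bar> \<le> L"
proof -
  define t' where "t' = (s + T) / 2"
  define F0 where "F0 = \<bar>f_integral n f (u s)\<bar>"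
  have t': "s < t'" "t' < T" and F0: "0 < F0"
    using assms by (auto simp: t'_def F0_def)
  obtain E where E: "\<And>t. t \<in> {0..t'} \<Longrightarrow> energy n (u t) \<le> E"
    using energy_bounded[OF t'(2)] by blast
  obtain d where d: "0 < d" "\<And>t. t \<in> {0..t'} \<Longrightarrow> dist t s < d \<Longrightarrow>
      dist (f_integral n f (u t)) (f_integral n f (u s)) < F0 / 2"
    using f_integral_continuous[OF t'(2)] F0 assms(1) t'(1)
    unfolding continuous_on_iff by (metis atLeastAtMost_iff half_gt_zero less_imp_le)
  define \<rho> where "\<rho> = min d (min (s / 2) (t' - s))"
  show thesis
  proof (rule that)
    show "0 < \<rho>" "0 < s - \<rho>" "s + \<rho> < T"
      using d(1) assms(1) t' by (auto simp: \<rho>_def)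
    fix t assume "\<bar>t - s\<bar> < \<rho>"
    then have "\<bar>t - s\<bar> < d" "\<bar>t - s\<bar> < s / 2" "\<bar>t - s\<bar> < t' - s"
      by (simp_all add: \<rho>_def)
    then have t: "t \<in> {0..t'}" "dist t s < d"
      unfolding abs_less_iff dist_real_def by auto
    then have "t \<in> {0..<T}" using t' by auto
    have "F0 / 2 \<le> \<bar>f_integral n f (u t)\<bar>"
      using d(2)[OF t] abs_triangle_ineq2[of "f_integral n f (u s)" "f_integral n f (u t)"]
      by (simp add: F0_def dist_real_def abs_minus_commute)
    moreover have "0 \<le> energy n (u t)" "energy n (u t) \<le> E"
      using energy_nonneg[OF \<open>t \<in> {0..<T}\<close>] E[OF t(1)] by auto
    ultimately show "\<bar>lambda_coef n f (u t)\<bar> \<le> E * omega TYPE('a) / (F0 / 2)"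
      using omega_pos[where 'a='a] F0 unfolding lambda_coef_eq abs_divide abs_mult
      by (intro frac_le mult_right_mono) auto
  qed
qed

lemma f_integral_has_real_derivative:
  assumes "0 < s" "s < T" "f_integral n f (u s) \<noteq> 0"
  shows "((\<lambda>t. f_integral n f (u t)) has_real_derivative
    sphere_int (\<lambda>x. f x * (crit_exp n * u s x powr (crit_exp n - 1) * cmcf_velocity n f (u s) x))) (at s)"
proof -
  obtain \<rho> L where \<rho>: "0 < \<rho>" "0 < s - \<rho>" "s + \<rho> < T"
    and L: "\<And>t. \<bar>t - s\<bar> < \<rho> \<Longrightarrow> \<bar>lambda_coef n f (u t)\<bar> \<le> L"
    using lambda_bounded_near[OF assms] by blast
  obtain m M Hb where "0 < m" and bnd: "\<And>t x. t \<in> {0..s + \<rho>} \<Longrightarrow> x \<in> sphere 0 1 \<Longrightarrow>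
      m \<le> u t x \<and> u t x \<le> M \<and> \<bar>mean_curv n (u t) x\<bar> \<le> Hb"
    using u_bounds[OF \<rho>(3)] by blast
  obtain fb where fb: "\<And>x. x \<in> sphere 0 1 \<Longrightarrow> \<bar>f x\<bar> \<le> fb"
    using f_bounded by blast
  let ?c = "crit_exp n"
  show ?thesis
    unfolding f_integral_def
  proof (rule has_real_derivative_sphere_int[where a = "s - \<rho>" and b = "s + \<rho>"
        and B = "real n / 2 * M powr ?c * (L * fb\<^sup>2 + fb * Hb)"])
    fix t and x :: 'a assume t: "s - \<rho> < t" "t < s + \<rho>" and x: "x \<in> sphere 0 1"
    then have tT: "0 < t" "t < T" "t \<in> {0..s + \<rho>}" using \<rho> by auto
    note b = bnd[OF tT(3) x]
    have u: "0 < u t x" using b \<open>0 < m\<close> by linarith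
    show "((\<lambda>t. f x * u t x powr ?c) has_real_derivative
        f x * (?c * u t x powr (?c - 1) * cmcf_velocity n f (u t) x)) (at t)"
      using DERIV_cmult[OF DERIV_fun_powr[OF u_has_real_derivative[OF tT(1,2) x] u, of ?c], of "f x"]
      by (simp add: mult.assoc)
    have "\<bar>lambda_coef n f (u t) * (f x)\<^sup>2 - f x * mean_curv n (u t) x\<bar>
        \<le> \<bar>lambda_coef n f (u t)\<bar> * \<bar>f x\<bar>\<^sup>2 + \<bar>f x\<bar> * \<bar>mean_curv n (u t) x\<bar>"
      using abs_triangle_ineq4[of "lambda_coef n f (u t) * (f x)\<^sup>2" "f x * mean_curv n (u t) x"]
      by (simp add: abs_mult)
    also have "\<dots> \<le> L * fb\<^sup>2 + fb * Hb"
      using L[of t] t fb[OF x] b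
      by (intro add_mono mult_mono power_mono) (auto simp: abs_less_iff)
    moreover have "u t x powr ?c \<le> M powr ?c"
      using b u n_ge_2 by (intro powr_mono2) (auto simp: crit_exp_def)
    ultimately show "\<bar>f x * (?c * u t x powr (?c - 1) * cmcf_velocity n f (u t) x)\<bar>
        \<le> real n / 2 * M powr ?c * (L * fb\<^sup>2 + fb * Hb)"
      unfolding f_times_velocity_eq[of n "u t" x f, OF n_ge_2 u] abs_mult
      by (intro mult_left_mono mult_mono) auto
  next
    fix t assume "s - \<rho> < t" "t < s + \<rho>"
    then have "t \<in> {0..<T}" using \<rho> by auto
    then show "continuous_on (sphere 0 1) (\<lambda>x. f x * u t x powr ?c)"
      using f_continuous u_slice_continuous u_pos
      by (intro continuous_intros) (auto simp: less_imp_neq[symmetric])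
  next
    have "s \<in> {0..<T}" using assms by auto
    then show "continuous_on (sphere 0 1)
        (\<lambda>x. f x * (?c * u s x powr (?c - 1) * cmcf_velocity n f (u s) x))"
      unfolding cmcf_velocity_def
      using f_continuous u_slice_continuous mean_curv_slice_continuous u_pos
      by (intro continuous_intros) (auto simp: less_imp_neq[symmetric])
  qed (use \<rho> in auto)
qed

lemma lambda_coef_ge:
  assumes "t \<in> {0..<T}" "0 < f_integral n f (u t)" "0 \<le> m" "\<And>x. x \<in> sphere 0 1 \<Longrightarrow> m \<le> u t x"
  shows "m\<^sup>2 * omega TYPE('a) / f_integral n f (u t) \<le> lambda_coef n f (u t)"
  unfolding lambda_coef_eq
  using energy_ge_sq[OF _ u_slice_continuous[OF assms(1)] assms(3,4)] n_ge_2 assms(2) omega_pos[where 'a='a]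
  by (intro divide_right_mono mult_right_mono) auto

lemma f_integral_deriv_pos_near_zero:
  assumes "t < T" "0 < sphere_int (\<lambda>x. (f x)\<^sup>2)"
  obtains \<epsilon> where "0 < \<epsilon>" "\<And>s. 0 < s \<Longrightarrow> s < t \<Longrightarrow> 0 < f_integral n f (u s) \<Longrightarrow>
    f_integral n f (u s) < \<epsilon> \<Longrightarrow>
    \<exists>D. ((\<lambda>t. f_integral n f (u t)) has_real_derivative D) (at s) \<and> 0 < D"
proof -
  let ?c = "crit_exp n" and ?\<omega> = "omega TYPE('a)" and ?Sf = "sphere_int (\<lambda>x. (f x)\<^sup>2)"
  obtain m M Hb where m: "0 < m" and bnd: "\<And>s x. s \<in> {0..t} \<Longrightarrow> x \<in> sphere 0 1 \<Longrightarrow>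
      m \<le> u s x \<and> u s x \<le> M \<and> \<bar>mean_curv n (u s) x\<bar> \<le> Hb"
    using u_bounds[OF assms(1)] by blast
  obtain fb where fb: "\<And>x. x \<in> sphere 0 1 \<Longrightarrow> \<bar>f x\<bar> \<le> fb"
    using f_bounded by blast
  define K where "K = fb * Hb * M powr ?c * ?\<omega>"
  define A where "A = m\<^sup>2 * ?\<omega> * (m powr ?c * ?Sf)"
  have A: "0 < A" using m assms(2) omega_pos[where 'a='a] by (simp add: A_def)
  \<comment> \<open>below the threshold, \<open>\<lambda> \<ge> m\<^sup>2 \<omega> / F\<close> is so large that the \<open>\<lambda> f\<^sup>2\<close> term dominates\<close>
  show thesis
  proof (rule that[of "A / (\<bar>K\<bar> + 1)"])
    show "0 < A / (\<bar>K\<bar> + 1)" using A by simp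
    fix s assume s: "0 < s" "s < t" "0 < f_integral n f (u s)" "f_integral n f (u s) < A / (\<bar>K\<bar> + 1)"
    then have sT: "s \<in> {0..<T}" "s \<in> {0..t}" using assms(1) by auto
    let ?lam = "lambda_coef n f (u s)"
    have lam: "m\<^sup>2 * ?\<omega> / f_integral n f (u s) \<le> ?lam"
      using lambda_coef_ge[OF sT(1) s(3)] m bnd[OF sT(2)] by auto
    have "\<bar>K\<bar> + 1 < A / f_integral n f (u s)"
      using s(3,4) A by (simp add: field_simps)
    also have "\<dots> \<le> ?lam * (m powr ?c * ?Sf)"
      using mult_right_mono[OF lam, of "m powr ?c * ?Sf"] assms(2) by (simp add: A_def)
    finally have "0 < real n / 2 * (?lam * m powr ?c * ?Sf - K)"
      using n_ge_2 by (simp add: algebra_simps)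
    also have "\<dots> \<le> sphere_int (\<lambda>x. f x * (?c * u s x powr (?c - 1) * cmcf_velocity n f (u s) x))"
      unfolding K_def
    proof (rule sphere_int_velocity_lower[OF n_ge_2 f_continuous
          u_slice_continuous[OF sT(1)] mean_curv_slice_continuous[OF sT(1)] m])
      show "0 \<le> ?lam"
        using lam s(3) omega_pos[where 'a='a] by (smt (verit) divide_nonneg_pos zero_le_power2 mult_nonneg_nonneg)
    qed (use bnd[OF sT(2)] fb in auto)
    finally show "\<exists>D. ((\<lambda>t. f_integral n f (u t)) has_real_derivative D) (at s) \<and> 0 < D"
      using f_integral_has_real_derivative[of s] s sT(1) by auto
  qed
qed

lemma f_integral_pos:
  assumes "0 < f_integral n f (u 0)" "t \<in> {0..<T}"
  shows "0 < f_integral n f (u t)"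
proof -
  have "0 \<in> {0..<T}" using assms(2) by auto
  then have "continuous_on (sphere 0 1) (\<lambda>x. u 0 x powr crit_exp n)"
    using u_slice_continuous u_pos by (intro continuous_intros) (auto simp: less_imp_neq[symmetric])
  then have "0 < sphere_int (\<lambda>x. (f x)\<^sup>2)"
    using sphere_int_sq_pos[OF f_continuous] assms(1) by (simp add: f_integral_def)
  then obtain \<epsilon> where "0 < \<epsilon>" and deriv: "\<And>s. 0 < s \<Longrightarrow> s < t \<Longrightarrow> 0 < f_integral n f (u s) \<Longrightarrow>
      f_integral n f (u s) < \<epsilon> \<Longrightarrow>
      \<exists>D. ((\<lambda>t. f_integral n f (u t)) has_real_derivative D) (at s) \<and> 0 < D"
    using f_integral_deriv_pos_near_zero[of t] assms(2) by auto
  show ?thesis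
    using pos_if_deriv_pos_near_zero[OF _ f_integral_continuous assms(1) \<open>0 < \<epsilon>\<close> deriv] assms(2)
    by auto
qed

end

theorem lemma3p1:
  fixes n :: nat and f :: "'a::euclidean_space \<Rightarrow> real"
    and u :: "real \<Rightarrow> 'a \<Rightarrow> real" and T :: real
  assumes "n \<ge> 2" and "DIM('a) = n + 1"
    and "\<exists>V. sphere 0 1 \<subseteq> V \<and> smooth_on V f"
    and "T > 0"
    and "cmcf_solution n f T u"
    and "f_integral n f (u 0) > 0"
  shows "\<forall>t\<in>{0..<T}. f_integral n f (u t) > 0"
proof -
  interpret cmcf_flow n f T u
    using assms(1,3,5) by unfold_locales
  show ?thesis using f_integral_pos assms(6) by blast
qed

end
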